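(* Let $z\in\mathbb{C}$ with $\mathrm{Re}(z)>0$ and $z\neq1$. (1) For $q>2$, $$\zeta_E(z,q)=\frac{(q-2)^{1-z}-(q-1)^{1-z}}{2(z-1)}-\frac1{\Gamma(z)}\sum_{k=1}^\infty\frac{2^k\,\Gamma(z+k)}{(k+1)!}\,\zeta_E(z+k,q).$$ (2) For $q>1$, $$\zeta_E(z,q)=\frac{(q-1)^{1-z}-q^{1-z}}{2(z-1)}-\frac1{\Gamma(z)}\sum_{k=1}^\infty\frac{\Gamma(z+2k)}{(2k+1)!}\,\zeta_E(z+2k,q).$$
   Context: For $q>0$, $\zeta_E(z,q)=\sum_{n=0}^\infty (-1)^n (n+q)^{-z}$ for $\mathrm{Re}(z)>0$, extended by analytic continuation to an entire function of $z$. *)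

theory Defs
  imports "HOL-Analysis.Analysis"
begin

text \<open>Alternating Hurwitz (Euler) zeta function, defined by its series
  zeta_E(z,q) = sum_{n>=0} (-1)^n (n+q)^(-z), which converges for Re z > 0
  and q > 0.  Only this half-plane is used in the statement below.\<close>
definition euler_hurwitz_zeta :: "complex \<Rightarrow> real \<Rightarrow> complex" where
  "euler_hurwitz_zeta z q =
     (\<Sum>n. (-1) ^ n * (complex_of_real (real n + q)) powr (- z))"

end

theory Submission
  imports Defs
begin

(* For x > 2 the generalised binomial series expands (x - 2)^(1-z) in the powers x^(1-z-j), and
   for x > 1 it expands (x - 1)^(1-z) - (x + 1)^(1-z) in the odd powers among them.  The term
   j = 1 is 2(z-1) x^(-z) in both cases; solving for x^(-z) writes it as a difference of two
   (1-z)-th powers divided by 2(z-1), minus the higher terms, whose coefficients (1-z choose j)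
   become the Gamma quotients of the statement.  Put x = n + q, multiply by (-1)^n and sum over n.
   The differences of powers at n + c and n + c + 2 telescope to c^(1-z) - (c+1)^(1-z), and the
   double series of higher terms converges absolutely for q > 2, resp. q > 1, so summing it over n
   first produces the values zeta_E(z + k, q). *)

lemma norm_summable_imp_has_suminf:
  fixes f :: "nat \<Rightarrow> 'a::banach"
  assumes "summable (\<lambda>n. norm (f n))"
  shows "(f has_sum (\<Sum>n. f n)) UNIV"
  by (rule norm_summable_imp_has_sum[OF assms summable_sums[OF summable_norm_cancel[OF assms]]])

lemma sums_suminf_swap:
  fixes F :: "nat \<Rightarrow> nat \<Rightarrow> 'a::banach"
  assumes rows: "\<And>n. summable (\<lambda>k. norm (F n k))"
    and total: "summable (\<lambda>n. \<Sum>k. norm (F n k))"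
  shows "summable (\<lambda>k. \<Sum>n. F n k)" and "(\<lambda>n. \<Sum>k. F n k) sums (\<Sum>k. \<Sum>n. F n k)"
proof -
  have norm_summable: "(\<lambda>(n, k). norm (F n k)) summable_on UNIV \<times> UNIV"
  proof (rule summable_on_SigmaI)
    show "((\<lambda>k. case (n, k) of (n, k) \<Rightarrow> norm (F n k)) has_sum (\<Sum>k. norm (F n k))) UNIV" for n
      using norm_summable_imp_has_suminf[of "\<lambda>k. norm (F n k)"] rows[of n] by simp
    show "(\<lambda>n. \<Sum>k. norm (F n k)) summable_on UNIV"
      using total by (simp add: summable_on_UNIV_nonneg_real_iff suminf_nonneg rows)
  qed auto
  then have norm_swapped: "(\<lambda>(k, n). norm (F n k)) summable_on UNIV \<times> UNIV"
    by (subst summable_on_swap) (simp add: case_prod_unfold)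
  have "(\<lambda>(n, k). F n k) summable_on UNIV \<times> UNIV"
    by (rule abs_summable_summable) (use norm_summable in \<open>simp add: case_prod_unfold\<close>)
  then obtain S where S: "((\<lambda>(n, k). F n k) has_sum S) (UNIV \<times> UNIV)"
    by (auto simp: summable_on_def)
  have "((\<lambda>n. \<Sum>k. F n k) has_sum S) UNIV"
    by (rule has_sum_SigmaD[OF S]) (simp add: norm_summable_imp_has_suminf[OF rows])
  moreover have "((\<lambda>k. \<Sum>n. F n k) has_sum S) UNIV"
  proof (rule has_sum_SigmaD)
    show "((\<lambda>(k, n). F n k) has_sum S) (UNIV \<times> UNIV)"
      using S by (subst (asm) has_sum_swap) (simp add: case_prod_unfold)
    have columns: "summable (\<lambda>n. norm (F n k))" for k
      using summable_on_SigmaD1[OF norm_swapped, of k] by (auto intro: summable_on_imp_summable)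
    show "((\<lambda>n. case (k, n) of (k, n) \<Rightarrow> F n k) has_sum (\<Sum>n. F n k)) UNIV" for k
      using norm_summable_imp_has_suminf[OF columns] by simp
  qed
  ultimately show "summable (\<lambda>k. \<Sum>n. F n k)" and "(\<lambda>n. \<Sum>k. F n k) sums (\<Sum>k. \<Sum>n. F n k)"
    by (auto dest!: has_sum_imp_sums simp: sums_iff)
qed

lemma alternating_telescoping_sums:
  fixes u :: "nat \<Rightarrow> 'a::real_normed_div_algebra"
  assumes "(\<lambda>n. u n - u (Suc n)) \<longlonglongrightarrow> 0"
  shows "(\<lambda>n. (-1) ^ n * (u n - u (n + 2))) sums (u 0 - u 1)"
proof -
  have partial_sums: "(\<Sum>i<N. (-1) ^ i * (u i - u (i + 2))) = u 0 - u 1 - (-1) ^ N * (u N - u (Suc N))" for N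
    by (induction N) (simp_all add: algebra_simps)
  have "(\<lambda>N. norm ((-1) ^ N * (u N - u (Suc N)))) \<longlonglongrightarrow> 0"
    using tendsto_norm_zero[OF assms] by (simp add: norm_mult norm_power)
  then have "(\<lambda>N. (-1) ^ N * (u N - u (Suc N))) \<longlonglongrightarrow> 0"
    by (rule tendsto_norm_zero_cancel)
  then have "(\<lambda>N. u 0 - u 1 - (-1) ^ N * (u N - u (Suc N))) \<longlonglongrightarrow> u 0 - u 1 - 0"
    by (intro tendsto_intros)
  then show ?thesis
    unfolding sums_def partial_sums by simp
qed

lemma norm_of_real_powr_diff_le:
  fixes a :: complex and x :: real
  assumes "x > 0" and "Re a \<le> 1"
  shows "norm (of_real x powr a - of_real (x + 1) powr a) \<le> norm a * x powr (Re a - 1)"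
proof -
  define S where "S = closed_segment (complex_of_real x) (of_real (x + 1))"
  have S: "S = of_real ` {x .. x + 1}"
    unfolding S_def by (subst closed_segment_of_real) (simp add: closed_segment_eq_real_ivl)
  have "norm (of_real x powr a - of_real (x + 1) powr a)
      \<le> norm a * x powr (Re a - 1) * norm (complex_of_real x - of_real (x + 1))"
  proof (rule field_differentiable_bound[where f' = "\<lambda>w. a * w powr (a - 1)" and S = S])
    fix w assume "w \<in> S"
    then obtain s where s: "x \<le> s" "w = of_real s" unfolding S by auto
    with assms have "w \<notin> \<real>\<^sub>\<le>\<^sub>0" by (auto simp: complex_nonpos_Reals_iff)
    then show "((\<lambda>w. w powr a) has_field_derivative a * w powr (a - 1)) (at w within S)"
      by (rule has_field_derivative_at_within[OF has_field_derivative_powr])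
    have "norm (a * w powr (a - 1)) = norm a * s powr (Re a - 1)"
      using s assms by (simp add: norm_mult norm_powr_real_powr)
    also have "\<dots> \<le> norm a * x powr (Re a - 1)"
      using s assms by (intro mult_left_mono powr_mono2') auto
    finally show "norm (a * w powr (a - 1)) \<le> norm a * x powr (Re a - 1)" .
  qed (auto simp: S_def)
  then show ?thesis by simp
qed

lemma of_real_powr_diff_tendsto_zero:
  fixes a :: complex and c :: real
  assumes "c > 0" and "Re a < 1"
  shows "(\<lambda>n. of_real (real n + c) powr a - of_real (real (Suc n) + c) powr a) \<longlonglongrightarrow> 0"
proof (rule Lim_null_comparison)
  have "norm (of_real (real n + c) powr a - of_real (real (Suc n) + c) powr a)
      \<le> norm a * (real n + c) powr (Re a - 1)" for n
  proof -
    have "real (Suc n) + c = (real n + c) + 1" by simp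
    then show ?thesis
      using assms by (simp only:) (rule norm_of_real_powr_diff_le; simp)
  qed
  then show "\<forall>\<^sub>F n in sequentially. norm (of_real (real n + c) powr a - of_real (real (Suc n) + c) powr a)
          \<le> norm a * (real n + c) powr (Re a - 1)"
    by simp
  have "filterlim (\<lambda>n. c + real n) at_top sequentially"
    by (rule filterlim_tendsto_add_at_top[OF tendsto_const filterlim_real_sequentially])
  then have "filterlim (\<lambda>n. real n + c) at_top sequentially"
    by (simp add: add.commute)
  then show "(\<lambda>n. norm a * (real n + c) powr (Re a - 1)) \<longlonglongrightarrow> 0"
    using assms by (intro tendsto_mult_right_zero tendsto_neg_powr) auto
qed

lemma summable_shifted_powr:
  fixes q s :: real
  assumes "q > 0" and "s > 1"
  shows "summable (\<lambda>n. (real n + q) powr - s)"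
proof (rule summable_comparison_test'[where N = 1])
  show "summable (\<lambda>n. real n powr - s)"
    using assms by (subst summable_real_powr_iff) simp
  show "norm ((real n + q) powr - s) \<le> real n powr - s" if "n \<ge> 1" for n
    using that assms by (auto intro!: powr_mono2')
qed

lemma summable_norm_gchoose_power:
  fixes a :: complex and r :: real
  assumes "0 \<le> r" and "r < 1"
  shows "summable (\<lambda>j. norm (a gchoose j) * r ^ j)"
proof -
  have "summable (\<lambda>j. norm ((a gchoose j) * complex_of_real r ^ j))"
    using assms by (intro abs_summable_in_conv_radius) (simp add: conv_radius_gchoose)
  then show ?thesis
    using assms by (simp add: norm_mult norm_power)
qed

lemma summable_comp_strict_mono:
  fixes f :: "nat \<Rightarrow> real"
  assumes "summable f" and "\<And>n. f n \<ge> 0" and "strict_mono g"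
  shows "summable (\<lambda>n. f (g n))"
proof -
  define f' where "f' n = (if n \<in> range g then f n else 0)" for n
  have "summable f'"
    using assms by (intro summable_comparison_test'[OF \<open>summable f\<close>, of 0]) (simp add: f'_def)
  then have "summable (\<lambda>n. f' (g n))"
    by (subst summable_mono_reindex[OF \<open>strict_mono g\<close>]) (auto simp: f'_def)
  then show ?thesis by (simp add: f'_def)
qed

lemma gbinomial_one_minus_times_minus_power:
  fixes z t :: complex
  assumes "z \<notin> \<int>\<^sub>\<le>\<^sub>0"
  shows "((1 - z) gchoose Suc j) * (- t) ^ Suc j
         = (z - 1) * t ^ Suc j * Gamma (z + of_nat j) / (Gamma z * fact (Suc j))"
proof -
  have "(1 - z) gchoose Suc j = (-1) ^ Suc j * pochhammer (z - 1) (Suc j) / fact (Suc j)"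
    by (simp add: gbinomial_pochhammer)
  moreover have "(- t) ^ Suc j = (-1) ^ Suc j * t ^ Suc j"
    by (rule power_minus)
  moreover have "pochhammer (z - 1) (Suc j) = (z - 1) * (Gamma (z + of_nat j) / Gamma z)"
    using assms by (simp add: pochhammer_rec pochhammer_Gamma)
  ultimately show ?thesis
    by (simp only:) (simp add: field_simps)
qed

lemma euler_hurwitz_zeta_sums:
  fixes w :: complex and q :: real
  assumes "Re w > 1" and "q > 0"
  shows "(\<lambda>n. (-1) ^ n * of_real (real n + q) powr - w) sums euler_hurwitz_zeta w q"
proof -
  have "norm ((-1) ^ n * complex_of_real (real n + q) powr - w) = (real n + q) powr - Re w" for n
    using assms by (simp add: norm_mult norm_power norm_powr_real_powr)
  then have "summable (\<lambda>n. norm ((-1) ^ n * complex_of_real (real n + q) powr - w))"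
    using summable_shifted_powr[of q "Re w"] assms by simp
  then show ?thesis
    unfolding euler_hurwitz_zeta_def by (rule summable_sums[OF summable_norm_cancel])
qed

lemma powr_minus_add_nat_le:
  fixes q x s :: real and m :: nat
  assumes "0 < q" and "q \<le> x" and "m \<ge> 1"
  shows "x powr - (s + real m) \<le> x powr - (s + 1) * (q / q ^ m)"
proof -
  have "x powr - (s + real m) = x powr - (s + 1) * x powr - (real m - 1)"
    by (simp add: powr_add[symmetric])
  also have "\<dots> \<le> x powr - (s + 1) * q powr - (real m - 1)"
    using assms by (intro mult_left_mono powr_mono2') auto
  also have "q powr - (real m - 1) = q / q ^ m"
    using assms by (simp add: powr_diff powr_realpow)
  finally show ?thesis .
qed

lemma summable_norm_weighted_shifted_powr:
  fixes z :: complex and q :: real and d :: "nat \<Rightarrow> complex" and m :: "nat \<Rightarrow> nat"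
  assumes z: "Re z > 0" and q: "q > 0" and m: "\<And>k. m k \<ge> 1"
    and d: "summable (\<lambda>k. norm (d k) / q ^ m k)"
  defines "G n k \<equiv> d k * of_real (real n + q) powr - (z + of_nat (m k))"
  shows "summable (\<lambda>k. norm (G n k))" and "summable (\<lambda>n. \<Sum>k. norm (G n k))"
proof -
  define B where "B n = (real n + q) powr - (Re z + 1) * q" for n
  define D where "D = (\<Sum>k. norm (d k) / q ^ m k)"
  have norm_G: "norm (G n k) \<le> B n * (norm (d k) / q ^ m k)" for n k
  proof -
    have "norm (G n k) = norm (d k) * (real n + q) powr - (Re z + real (m k))"
      using q by (simp add: G_def norm_mult norm_powr_real_powr)
    also have "\<dots> \<le> norm (d k) * ((real n + q) powr - (Re z + 1) * (q / q ^ m k))"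
      using q m[of k] by (intro mult_left_mono powr_minus_add_nat_le) auto
    finally show ?thesis
      by (simp add: B_def mult_ac)
  qed
  show rows: "summable (\<lambda>k. norm (G n k))" for n
    by (rule summable_comparison_test'[OF summable_mult[OF d, of "B n"]]) (use norm_G in simp)
  have row_sums: "(\<Sum>k. norm (G n k)) \<le> B n * D" for n
  proof -
    have "(\<Sum>k. norm (G n k)) \<le> (\<Sum>k. B n * (norm (d k) / q ^ m k))"
      by (intro suminf_le rows summable_mult d norm_G)
    also have "\<dots> = B n * D"
      unfolding D_def by (rule suminf_mult[OF d])
    finally show ?thesis .
  qed
  have "summable (\<lambda>n. B n * D)"
    using summable_shifted_powr[of q "Re z + 1"] z q unfolding B_def
    by (intro summable_mult2) simp
  then show "summable (\<lambda>n. \<Sum>k. norm (G n k))"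
  proof (rule summable_comparison_test')
    show "norm (\<Sum>k. norm (G n k)) \<le> B n * D" for n
      using row_sums[of n] suminf_nonneg[OF rows[of n] norm_ge_zero] by simp
  qed
qed

lemma euler_hurwitz_zeta_weighted_shift_series:
  fixes z :: complex and q :: real and d :: "nat \<Rightarrow> complex" and m :: "nat \<Rightarrow> nat"
  assumes z: "Re z > 0" and q: "q > 0" and m: "\<And>k. m k \<ge> 1"
    and d: "summable (\<lambda>k. norm (d k) / q ^ m k)"
  shows "summable (\<lambda>k. d k * euler_hurwitz_zeta (z + of_nat (m k)) q)"
    and "(\<lambda>n. (-1) ^ n * (\<Sum>k. d k * of_real (real n + q) powr - (z + of_nat (m k)))) sums
           (\<Sum>k. d k * euler_hurwitz_zeta (z + of_nat (m k)) q)"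
proof -
  define F where "F n k = (-1) ^ n * (d k * of_real (real n + q) powr - (z + of_nat (m k)))" for n k
  note G = summable_norm_weighted_shifted_powr[OF z q m d]
  have "norm (F n k) = norm (d k * of_real (real n + q) powr - (z + of_nat (m k)))" for n k
    by (simp add: F_def norm_mult norm_power)
  note swap = sums_suminf_swap[of F, unfolded this, OF G]
  have columns: "(\<Sum>n. F n k) = d k * euler_hurwitz_zeta (z + of_nat (m k)) q" for k
  proof -
    have "(\<lambda>n. d k * ((-1) ^ n * of_real (real n + q) powr - (z + of_nat (m k))))
        sums (d k * euler_hurwitz_zeta (z + of_nat (m k)) q)"
      using z q m[of k] by (intro sums_mult euler_hurwitz_zeta_sums) auto
    moreover have "(\<lambda>n. d k * ((-1) ^ n * of_real (real n + q) powr - (z + of_nat (m k)))) = (\<lambda>n. F n k)"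
      unfolding F_def by (rule ext) (rule mult.left_commute)
    ultimately show ?thesis
      by (simp only:) (rule sums_unique[symmetric])
  qed
  have rows: "(\<Sum>k. F n k) = (-1) ^ n * (\<Sum>k. d k * of_real (real n + q) powr - (z + of_nat (m k)))" for n
    unfolding F_def by (rule suminf_mult[OF summable_norm_cancel[OF G(1)]])
  show "summable (\<lambda>k. d k * euler_hurwitz_zeta (z + of_nat (m k)) q)"
    using swap(1) unfolding columns .
  show "(\<lambda>n. (-1) ^ n * (\<Sum>k. d k * of_real (real n + q) powr - (z + of_nat (m k)))) sums
           (\<Sum>k. d k * euler_hurwitz_zeta (z + of_nat (m k)) q)"
    using swap(2) unfolding rows columns .
qed

lemma euler_hurwitz_zeta_eq_of_expansion:
  fixes z :: complex and q h :: real and d :: "nat \<Rightarrow> complex" and m :: "nat \<Rightarrow> nat"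
  assumes z: "Re z > 0" and q: "q > 0" "h < q" and m: "\<And>k. m k \<ge> 1"
    and d: "summable (\<lambda>k. norm (d k) / q ^ m k)"
    and expansion: "\<And>x. x \<ge> q \<Longrightarrow> (\<lambda>k. d k * of_real x powr - (z + of_nat (m k))) sums
          ((of_real (x - h) powr (1 - z) - of_real (x - h + 2) powr (1 - z)) / (2 * (z - 1))
           - of_real x powr - z)"
  shows "summable (\<lambda>k. d k * euler_hurwitz_zeta (z + of_nat (m k)) q)"
    and "euler_hurwitz_zeta z q =
           (of_real (q - h) powr (1 - z) - of_real (q - h + 1) powr (1 - z)) / (2 * (z - 1))
           - (\<Sum>k. d k * euler_hurwitz_zeta (z + of_nat (m k)) q)"
proof -
  note coefficients = euler_hurwitz_zeta_weighted_shift_series[OF z q(1) m d]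
  show "summable (\<lambda>k. d k * euler_hurwitz_zeta (z + of_nat (m k)) q)"
    by (rule coefficients(1))
  define u where "u n = complex_of_real (real n + (q - h)) powr (1 - z)" for n
  have expansion_at: "(\<Sum>k. d k * of_real (real n + q) powr - (z + of_nat (m k)))
      = (u n - u (n + 2)) / (2 * (z - 1)) - of_real (real n + q) powr - z" for n
  proof -
    have "u n = of_real (real n + q - h) powr (1 - z)"
      and "u (n + 2) = of_real (real n + q - h + 2) powr (1 - z)"
      by (simp_all add: u_def algebra_simps)
    then show ?thesis
      using q by (simp only:) (rule sums_unique[OF expansion, symmetric]; simp)
  qed
  have "(\<lambda>n. (-1) ^ n * (u n - u (n + 2))) sums (u 0 - u 1)"
    using of_real_powr_diff_tendsto_zero[of "q - h" "1 - z"] q z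
    unfolding u_def by (intro alternating_telescoping_sums) auto
  from sums_diff[OF sums_divide[OF this, of "2 * (z - 1)"] coefficients(2)]
  have "(\<lambda>n. (-1) ^ n * (u n - u (n + 2)) / (2 * (z - 1))
            - (-1) ^ n * (\<Sum>k. d k * of_real (real n + q) powr - (z + of_nat (m k))))
        sums ((u 0 - u 1) / (2 * (z - 1)) - (\<Sum>k. d k * euler_hurwitz_zeta (z + of_nat (m k)) q))" .
  also have "(\<lambda>n. (-1) ^ n * (u n - u (n + 2)) / (2 * (z - 1))
            - (-1) ^ n * (\<Sum>k. d k * of_real (real n + q) powr - (z + of_nat (m k))))
      = (\<lambda>n. (-1) ^ n * of_real (real n + q) powr - z)"
    by (rule ext) (unfold expansion_at, simp add: right_diff_distrib)
  finally have "(\<lambda>n. (-1) ^ n * of_real (real n + q) powr - z)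
      sums ((u 0 - u 1) / (2 * (z - 1)) - (\<Sum>k. d k * euler_hurwitz_zeta (z + of_nat (m k)) q))" .
  moreover have "u 0 = of_real (q - h) powr (1 - z)" and "u 1 = of_real (q - h + 1) powr (1 - z)"
    by (simp_all add: u_def algebra_simps)
  ultimately show "euler_hurwitz_zeta z q =
           (of_real (q - h) powr (1 - z) - of_real (q - h + 1) powr (1 - z)) / (2 * (z - 1))
           - (\<Sum>k. d k * euler_hurwitz_zeta (z + of_nat (m k)) q)"
    unfolding euler_hurwitz_zeta_def by (simp only:) (rule sums_unique[symmetric])
qed

lemma euler_hurwitz_zeta_eq_of_scaled_expansion:
  fixes z G :: complex and q h :: real and c :: "nat \<Rightarrow> complex" and m :: "nat \<Rightarrow> nat"
  assumes z: "Re z > 0" and q: "q > 0" "h < q" and m: "\<And>k. m k \<ge> 1" and G: "G \<noteq> 0"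
    and c: "summable (\<lambda>k. norm (c k / G) / q ^ m k)"
    and expansion: "\<And>x. x \<ge> q \<Longrightarrow> (\<lambda>k. c k / G * of_real x powr - (z + of_nat (m k))) sums
          ((of_real (x - h) powr (1 - z) - of_real (x - h + 2) powr (1 - z)) / (2 * (z - 1))
           - of_real x powr - z)"
  shows "summable (\<lambda>k. c k * euler_hurwitz_zeta (z + of_nat (m k)) q) \<and>
         euler_hurwitz_zeta z q =
           (of_real (q - h) powr (1 - z) - of_real (q - h + 1) powr (1 - z)) / (2 * (z - 1))
           - 1 / G * (\<Sum>k. c k * euler_hurwitz_zeta (z + of_nat (m k)) q)"
proof -
  note identity = euler_hurwitz_zeta_eq_of_expansion[OF z q m c expansion]
  from identity(1) G have summable: "summable (\<lambda>k. c k * euler_hurwitz_zeta (z + of_nat (m k)) q)"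
    by simp
  moreover have "(\<Sum>k. c k / G * euler_hurwitz_zeta (z + of_nat (m k)) q)
      = 1 / G * (\<Sum>k. c k * euler_hurwitz_zeta (z + of_nat (m k)) q)"
    using suminf_divide[OF summable, of G] by simp
  ultimately show ?thesis
    using identity(2) by simp
qed

lemma of_real_powr_minus_two_expansion:
  fixes z :: complex and x :: real
  assumes "z \<noteq> 1" and "x > 2"
  shows "(\<lambda>k. ((1 - z) gchoose (k + 2)) * (-2) ^ (k + 2) / (2 * (z - 1))
              * of_real x powr - (z + of_nat (Suc k)))
         sums ((of_real (x - 2) powr (1 - z) - of_real x powr (1 - z)) / (2 * (z - 1))
               - of_real x powr - z)"
proof -
  define s where "s j = ((1 - z) gchoose j) * of_real x powr (1 - z - of_nat j) * of_real (-2) ^ j" for j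
  have summand: "s (k + 2) / (2 * (z - 1))
      = ((1 - z) gchoose (k + 2)) * (-2) ^ (k + 2) / (2 * (z - 1))
        * of_real x powr - (z + of_nat (Suc k))" for k
  proof -
    have exponent: "1 - z - of_nat (k + 2) = - (z + of_nat (Suc k))" by simp
    show ?thesis unfolding s_def exponent by simp
  qed
  have total_value: "(A - B - 2 * (z - 1) * X) / (2 * (z - 1)) = (A - B) / (2 * (z - 1)) - X" for A B X
    using assms by (simp add: field_simps)
  have "s sums of_real (x + -2) powr (1 - z)"
    unfolding s_def using assms by (intro gen_binomial_complex'') auto
  then have "(\<lambda>k. s (k + 2)) sums (of_real (x - 2) powr (1 - z) - (\<Sum>j<2. s j))"
    by (subst sums_iff_shift) simp
  moreover have "(\<Sum>j<2. s j) = of_real x powr (1 - z) + 2 * (z - 1) * of_real x powr - z"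
    by (simp add: s_def eval_nat_numeral algebra_simps)
  ultimately have "(\<lambda>k. s (k + 2) / (2 * (z - 1))) sums
      ((of_real (x - 2) powr (1 - z) - of_real x powr (1 - z) - 2 * (z - 1) * of_real x powr - z)
       / (2 * (z - 1)))"
    by (intro sums_divide) (simp add: algebra_simps)
  then show ?thesis
    unfolding summand total_value .
qed

lemma of_real_powr_symmetric_difference_expansion:
  fixes z :: complex and x :: real
  assumes "z \<noteq> 1" and "x > 1"
  shows "(\<lambda>k. - ((1 - z) gchoose (2 * Suc k + 1)) / (z - 1) * of_real x powr - (z + of_nat (2 * Suc k)))
         sums ((of_real (x - 1) powr (1 - z) - of_real (x + 1) powr (1 - z)) / (2 * (z - 1))
               - of_real x powr - z)"
proof -
  define s where "s j = ((1 - z) gchoose j) * of_real x powr (1 - z - of_nat j) * ((-1) ^ j - 1)" for j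
  have summand: "s (2 * Suc k + 1) / (2 * (z - 1))
      = - ((1 - z) gchoose (2 * Suc k + 1)) / (z - 1) * of_real x powr - (z + of_nat (2 * Suc k))" for k
  proof -
    have exponent: "1 - z - of_nat (2 * Suc k + 1) = - (z + of_nat (2 * Suc k))" by simp
    show ?thesis using assms unfolding s_def exponent by (simp add: field_simps)
  qed
  have total_value: "(A - B - 2 * (z - 1) * X) / (2 * (z - 1)) = (A - B) / (2 * (z - 1)) - X" for A B X
    using assms by (simp add: field_simps)
  have "(\<lambda>j. ((1 - z) gchoose j) * of_real x powr (1 - z - of_nat j) * of_real (-1) ^ j
           - ((1 - z) gchoose j) * of_real x powr (1 - z - of_nat j) * of_real 1 ^ j)
        sums (of_real (x + -1) powr (1 - z) - of_real (x + 1) powr (1 - z))"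
    using assms by (intro sums_diff gen_binomial_complex'') auto
  moreover have "(\<lambda>j. ((1 - z) gchoose j) * of_real x powr (1 - z - of_nat j) * of_real (-1) ^ j
           - ((1 - z) gchoose j) * of_real x powr (1 - z - of_nat j) * of_real 1 ^ j) = s"
    by (auto simp: s_def algebra_simps)
  ultimately have "s sums (of_real (x - 1) powr (1 - z) - of_real (x + 1) powr (1 - z))"
    by simp
  moreover have "strict_mono (\<lambda>i::nat. 2 * i + 1)"
    by (rule strict_monoI) simp
  moreover have "s j = 0" if "j \<notin> range (\<lambda>i. 2 * i + 1)" for j
  proof -
    have "even j"
    proof (rule ccontr)
      assume "odd j"
      then obtain i where "j = 2 * i + 1" by (rule oddE)
      with that show False by auto
    qed
    then show ?thesis unfolding s_def by simp
  qed
  ultimately have "(\<lambda>i. s (2 * i + 1)) sums (of_real (x - 1) powr (1 - z) - of_real (x + 1) powr (1 - z))"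
    by (subst sums_mono_reindex) simp_all
  moreover have "s 1 = 2 * (z - 1) * of_real x powr - z"
    by (simp add: s_def algebra_simps)
  ultimately have "(\<lambda>k. s (2 * Suc k + 1) / (2 * (z - 1))) sums
      ((of_real (x - 1) powr (1 - z) - of_real (x + 1) powr (1 - z) - 2 * (z - 1) * of_real x powr - z)
       / (2 * (z - 1)))"
    by (intro sums_divide) (subst sums_Suc_iff[of "\<lambda>i. s (2 * i + 1)"], simp)
  then show ?thesis
    unfolding summand total_value .
qed

lemma summable_minus_two_expansion_coefficients:
  fixes z :: complex and q :: real
  assumes "q > 2"
  shows "summable (\<lambda>k. norm (((1 - z) gchoose (k + 2)) * (-2) ^ (k + 2) / (2 * (z - 1))) / q ^ Suc k)"
proof -
  have "summable (\<lambda>j. norm ((1 - z) gchoose j) * (2 / q) ^ j)"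
    using assms by (intro summable_norm_gchoose_power) auto
  then have "summable (\<lambda>k. norm ((1 - z) gchoose (k + 2)) * (2 / q) ^ (k + 2))"
    by (rule summable_ignore_initial_segment)
  then have "summable (\<lambda>k. 1 / norm (2 * (z - 1))
      * (q * (norm ((1 - z) gchoose (k + 2)) * (2 / q) ^ (k + 2))))"
    by (intro summable_mult)
  then show ?thesis
    using assms by (simp add: norm_mult norm_divide norm_power power_divide field_simps)
qed

lemma summable_symmetric_difference_expansion_coefficients:
  fixes z :: complex and q :: real
  assumes "q > 1"
  shows "summable (\<lambda>k. norm (- ((1 - z) gchoose (2 * Suc k + 1)) / (z - 1)) / q ^ (2 * Suc k))"
proof -
  have "summable (\<lambda>j. norm ((1 - z) gchoose j) * (1 / q) ^ j)"
    using assms by (intro summable_norm_gchoose_power) auto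
  then have "summable (\<lambda>k. norm ((1 - z) gchoose (2 * Suc k + 1)) * (1 / q) ^ (2 * Suc k + 1))"
    by (rule summable_comp_strict_mono) (use assms in \<open>auto intro: strict_monoI\<close>)
  then have "summable (\<lambda>k. 1 / norm (z - 1)
      * (q * (norm ((1 - z) gchoose (2 * Suc k + 1)) * (1 / q) ^ (2 * Suc k + 1))))"
    by (intro summable_mult)
  then show ?thesis
    using assms by (simp add: norm_mult norm_divide norm_power power_divide field_simps)
qed

lemma euler_hurwitz_zeta_eq_series_shifts:
  fixes z :: complex and q :: real
  assumes z: "Re z > 0" "z \<noteq> 1" and q: "q > 2"
  shows "summable (\<lambda>k. 2 ^ (Suc k) * Gamma (z + of_nat (Suc k)) / fact (Suc k + 1)
                          * euler_hurwitz_zeta (z + of_nat (Suc k)) q) \<and>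
           euler_hurwitz_zeta z q =
             (complex_of_real (q - 2) powr (1 - z) - complex_of_real (q - 1) powr (1 - z))
               / (2 * (z - 1))
             - (1 / Gamma z) *
               (\<Sum>k. 2 ^ (Suc k) * Gamma (z + of_nat (Suc k)) / fact (Suc k + 1)
                      * euler_hurwitz_zeta (z + of_nat (Suc k)) q)"
proof -
  define c where "c k = 2 ^ (Suc k) * Gamma (z + of_nat (Suc k)) / fact (Suc k + 1)" for k
  have nonpos: "z \<notin> \<int>\<^sub>\<le>\<^sub>0" and Gamma: "Gamma z \<noteq> 0"
    using z by (auto simp: nonpos_Ints_def Gamma_eq_zero_iff)
  have coefficient: "((1 - z) gchoose (k + 2)) * (-2) ^ (k + 2) / (2 * (z - 1)) = c k / Gamma z" for k
  proof -
    define F where "F = (fact (Suc k + 1) :: complex)"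
    have "k + 2 = Suc (Suc k)" and "Suc k + 1 = Suc (Suc k)" by simp_all
    then have "((1 - z) gchoose (k + 2)) * (-2) ^ (k + 2)
        = (z - 1) * 2 ^ (k + 2) * Gamma (z + of_nat (Suc k)) / (Gamma z * F)"
      unfolding F_def by (simp only:) (rule gbinomial_one_minus_times_minus_power[OF nonpos])
    moreover have "F \<noteq> 0"
      unfolding F_def by (rule fact_nonzero)
    ultimately show ?thesis
      using z Gamma unfolding c_def F_def[symmetric] by (simp add: field_simps)
  qed
  have summable_c: "summable (\<lambda>k. norm (c k / Gamma z) / q ^ Suc k)"
    using summable_minus_two_expansion_coefficients[OF q, of z] unfolding coefficient .
  have expansion: "(\<lambda>k. c k / Gamma z * of_real x powr - (z + of_nat (Suc k))) sums
      ((of_real (x - 2) powr (1 - z) - of_real (x - 2 + 2) powr (1 - z)) / (2 * (z - 1)) - of_real x powr - z)"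
    if "x \<ge> q" for x
    using of_real_powr_minus_two_expansion[OF z(2), of x] that q unfolding coefficient by simp
  have "q - 2 + 1 = q - 1" by simp
  with euler_hurwitz_zeta_eq_of_scaled_expansion[OF z(1) _ _ _ Gamma summable_c expansion] q show ?thesis
    unfolding c_def by simp
qed

lemma euler_hurwitz_zeta_eq_series_even_shifts:
  fixes z :: complex and q :: real
  assumes z: "Re z > 0" "z \<noteq> 1" and q: "q > 1"
  shows "summable (\<lambda>k. Gamma (z + of_nat (2 * Suc k)) / fact (2 * Suc k + 1)
                          * euler_hurwitz_zeta (z + of_nat (2 * Suc k)) q) \<and>
           euler_hurwitz_zeta z q =
             (complex_of_real (q - 1) powr (1 - z) - complex_of_real q powr (1 - z))
               / (2 * (z - 1))
             - (1 / Gamma z) *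
               (\<Sum>k. Gamma (z + of_nat (2 * Suc k)) / fact (2 * Suc k + 1)
                      * euler_hurwitz_zeta (z + of_nat (2 * Suc k)) q)"
proof -
  define c where "c k = Gamma (z + of_nat (2 * Suc k)) / fact (2 * Suc k + 1)" for k
  have nonpos: "z \<notin> \<int>\<^sub>\<le>\<^sub>0" and Gamma: "Gamma z \<noteq> 0"
    using z by (auto simp: nonpos_Ints_def Gamma_eq_zero_iff)
  have coefficient: "- ((1 - z) gchoose (2 * Suc k + 1)) / (z - 1) = c k / Gamma z" for k
  proof -
    define F where "F = (fact (2 * Suc k + 1) :: complex)"
    have "2 * Suc k + 1 = Suc (2 * Suc k)" by simp
    then have "((1 - z) gchoose (2 * Suc k + 1)) * (- 1) ^ (2 * Suc k + 1)
        = (z - 1) * 1 ^ (2 * Suc k + 1) * Gamma (z + of_nat (2 * Suc k)) / (Gamma z * F)"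
      unfolding F_def by (simp only:) (rule gbinomial_one_minus_times_minus_power[OF nonpos])
    moreover have "F \<noteq> 0"
      unfolding F_def by (rule fact_nonzero)
    ultimately show ?thesis
      using z Gamma unfolding c_def F_def[symmetric] by (simp add: field_simps)
  qed
  have summable_c: "summable (\<lambda>k. norm (c k / Gamma z) / q ^ (2 * Suc k))"
    using summable_symmetric_difference_expansion_coefficients[OF q, of z] unfolding coefficient .
  have expansion: "(\<lambda>k. c k / Gamma z * of_real x powr - (z + of_nat (2 * Suc k))) sums
      ((of_real (x - 1) powr (1 - z) - of_real (x - 1 + 2) powr (1 - z)) / (2 * (z - 1)) - of_real x powr - z)"
    if "x \<ge> q" for x
  proof -
    have "x - 1 + 2 = x + 1" by simp
    with of_real_powr_symmetric_difference_expansion[OF z(2), of x] that q show ?thesis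
      unfolding coefficient by (simp only:)
  qed
  have "q - 1 + 1 = q" by simp
  with euler_hurwitz_zeta_eq_of_scaled_expansion[OF z(1) _ _ _ Gamma summable_c expansion] q show ?thesis
    unfolding c_def by simp
qed

theorem lemma3p18:
  fixes z :: complex
  assumes "Re z > 0" and "z \<noteq> 1"
  shows "(\<forall>q::real. q > 2 \<longrightarrow>
           summable (\<lambda>k. 2 ^ (Suc k) * Gamma (z + of_nat (Suc k)) / fact (Suc k + 1)
                          * euler_hurwitz_zeta (z + of_nat (Suc k)) q) \<and>
           euler_hurwitz_zeta z q =
             (complex_of_real (q - 2) powr (1 - z) - complex_of_real (q - 1) powr (1 - z))
               / (2 * (z - 1))
             - (1 / Gamma z) *
               (\<Sum>k. 2 ^ (Suc k) * Gamma (z + of_nat (Suc k)) / fact (Suc k + 1)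
                      * euler_hurwitz_zeta (z + of_nat (Suc k)) q))
       \<and> (\<forall>q::real. q > 1 \<longrightarrow>
           summable (\<lambda>k. Gamma (z + of_nat (2 * Suc k)) / fact (2 * Suc k + 1)
                          * euler_hurwitz_zeta (z + of_nat (2 * Suc k)) q) \<and>
           euler_hurwitz_zeta z q =
             (complex_of_real (q - 1) powr (1 - z) - complex_of_real q powr (1 - z))
               / (2 * (z - 1))
             - (1 / Gamma z) *
               (\<Sum>k. Gamma (z + of_nat (2 * Suc k)) / fact (2 * Suc k + 1)
                      * euler_hurwitz_zeta (z + of_nat (2 * Suc k)) q))"
  using euler_hurwitz_zeta_eq_series_shifts[OF assms] euler_hurwitz_zeta_eq_series_even_shifts[OF assms]
  by blast

end
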